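(* Let $c=0$, so $f_0(z)=z^2$. For $z_0\in\mathbb{C}$ and $q\in(0,1)$ let $(z_q(n))_{n\ge0}$ be the fractional-order Julia sequence defined by $z_q(0)=z_0$ and $$z_q(n)=z_0+\frac{1}{\Gamma(q)}\sum_{i=1}^{n}\frac{\Gamma(n-i+q)}{\Gamma(n-i+1)}\,f_0\big(z_q(i-1)\big),\qquad n\ge1.$$ Then as $q\downarrow 0$ the sequence becomes $z_0,\ z_0^2+z_0,\ (z_0^2+z_0)^2+z_0,\dots$, i.e. for every $n\ge0$, $\lim_{q\downarrow0}z_q(n)=P_{z_0}^{\,n+1}(0)$, where $P_{a}(w)=w^2+a$. Hence the fractional-order filled Julia set for $c=0$ (the set of $z_0$ for which $(z_q(n))$ remains bounded) coincides, in the limit $q\downarrow0$, with the classical Mandelbrot set $\{a\in\mathbb{C}: (P_a^{\,n}(0))_{n\ge1}\text{ bounded}\}$.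
   Context: The recursion is the numerical solution of the Caputo-like fractional difference initial value problem $\Delta^q z(t)=f_c(z(t+q-1))$, $t\in\mathbb{N}_{1-q}$, $z(0)=z_0$, of order $q\in(0,1)$, with $f_c(z)=z^2+c$; for fixed $c$ and variable initial point $z_0$ it defines the fractional-order (filled) Julia map. $\Gamma$ is Euler's Gamma function. *)

theory Defs
  imports "HOL-Analysis.Analysis"
begin

function frac_julia0 :: "real \<Rightarrow> complex \<Rightarrow> nat \<Rightarrow> complex" where
  "frac_julia0 q z0 0 = z0"
| "frac_julia0 q z0 (Suc m) =
     z0 + complex_of_real (1 / Gamma q) *
       (\<Sum>i\<in>{1..Suc m}.
          complex_of_real (Gamma (real (Suc m - i) + q) / Gamma (real (Suc m - i) + 1))
          * (frac_julia0 q z0 (i - 1))\<^sup>2)"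
  by pat_completeness auto
termination
  by (relation "Wellfounded.measure (\<lambda>(q, z0, n). n)") auto

definition quad_poly :: "complex \<Rightarrow> complex \<Rightarrow> complex" where
  "quad_poly a w = w\<^sup>2 + a"

definition mandelbrot_set :: "complex set" where
  "mandelbrot_set = {a. bounded (range (\<lambda>n::nat. (quad_poly a ^^ (Suc n)) 0))}"

end

theory Submission
  imports Defs
begin

text \<open>In the recursion for \<open>z\<^sub>q(m + 1)\<close> the newest term \<open>i = m + 1\<close> carries the weight
  \<open>\<Gamma>(q)/\<Gamma>(1) = \<Gamma>(q)\<close>, which cancels the prefactor \<open>1/\<Gamma>(q)\<close> and leaves \<open>z\<^sub>q(m)\<^sup>2\<close>. All older
  terms form a memory sum whose weights \<open>\<Gamma>(k + q)/\<Gamma>(k + 1)\<close> tend to \<open>1/k\<close>, so the memory stays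
  bounded while its prefactor \<open>1/\<Gamma>(q)\<close> tends to 0. By induction on \<open>n\<close>, \<open>z\<^sub>q(n)\<close> therefore
  tends to the orbit \<open>P\<^bsub>z0\<^esub>\<^bsup>n+1\<^esup>(0)\<close> of the classical recursion \<open>w \<mapsto> w\<^sup>2 + z0\<close>, and the
  boundedness of these limits is the defining condition of the Mandelbrot set.\<close>

definition frac_julia0_memory :: "real \<Rightarrow> complex \<Rightarrow> nat \<Rightarrow> complex" where
  "frac_julia0_memory q z0 m =
     (\<Sum>i\<in>{1..m}.
        complex_of_real (Gamma (real (Suc m - i) + q) / Gamma (real (Suc m - i) + 1))
        * (frac_julia0 q z0 (i - 1))\<^sup>2)"

lemma frac_julia0_Suc_eq_memory:
  assumes "q > 0"
  shows "frac_julia0 q z0 (Suc m) =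
           z0 + (frac_julia0 q z0 m)\<^sup>2 + complex_of_real (rGamma q) * frac_julia0_memory q z0 m"
proof -
  have "Gamma q \<noteq> 0"
    using Gamma_real_pos[OF assms] by simp
  then have cancel: "complex_of_real (1 / Gamma q) * complex_of_real (Gamma q) = 1"
    by (simp flip: of_real_mult)
  have "{1..Suc m} = insert (Suc m) {1..m}"
    by auto
  then have "frac_julia0 q z0 (Suc m) =
      z0 + complex_of_real (1 / Gamma q) *
        (complex_of_real (Gamma q) * (frac_julia0 q z0 m)\<^sup>2 + frac_julia0_memory q z0 m)"
    by (simp add: frac_julia0_memory_def)
  also have "\<dots> = z0 + (frac_julia0 q z0 m)\<^sup>2 + complex_of_real (rGamma q) * frac_julia0_memory q z0 m"
    by (simp only: distrib_left mult.assoc[symmetric] cancel)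
       (simp add: rGamma_inverse_Gamma divide_inverse of_real_inverse)
  finally show ?thesis .
qed

lemma tendsto_Gamma_shift_ratio:
  fixes x :: real
  assumes "x > 0"
  shows "((\<lambda>q. Gamma (x + q) / Gamma (x + 1)) \<longlongrightarrow> 1 / x) (at 0)"
proof -
  have not_pole: "x \<notin> \<int>\<^sub>\<le>\<^sub>0"
    using assms by (auto elim!: nonpos_Ints_cases)
  have "isCont (\<lambda>q. Gamma (x + q)) 0"
    using not_pole by (intro isCont_Gamma continuous_intros) simp
  moreover have "Gamma (x + 1) > 0"
    using assms by (intro Gamma_real_pos) simp
  ultimately have "((\<lambda>q. Gamma (x + q) / Gamma (x + 1)) \<longlongrightarrow> Gamma x / Gamma (x + 1)) (at 0)"
    by (intro tendsto_divide tendsto_const) (auto simp: isCont_def)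
  also have "Gamma x / Gamma (x + 1) = 1 / x"
    using not_pole Gamma_real_pos[OF assms] by (simp add: Gamma_plus1)
  finally show ?thesis .
qed

lemma tendsto_rGamma_at_right_0: "((\<lambda>q. rGamma q) \<longlongrightarrow> (0::real)) (at_right 0)"
proof -
  have "isCont rGamma (0::real)"
    by (rule DERIV_isCont[OF has_field_derivative_rGamma])
  then show ?thesis
    unfolding isCont_def rGamma_0
    by (auto intro: tendsto_within_subset)
qed

lemma tendsto_frac_julia0_memory:
  assumes "\<And>i. i < m \<Longrightarrow> ((\<lambda>q. frac_julia0 q z0 i) \<longlongrightarrow> w i) (at_right 0)"
  shows "((\<lambda>q. frac_julia0_memory q z0 m) \<longlongrightarrow>
           (\<Sum>i\<in>{1..m}. complex_of_real (1 / real (Suc m - i)) * (w (i - 1))\<^sup>2)) (at_right 0)"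
  unfolding frac_julia0_memory_def
proof (intro tendsto_sum tendsto_mult tendsto_power tendsto_of_real)
  fix i assume i: "i \<in> {1..m}"
  then show "((\<lambda>q. frac_julia0 q z0 (i - 1)) \<longlongrightarrow> w (i - 1)) (at_right 0)"
    by (intro assms) auto
  have "((\<lambda>q. Gamma (real (Suc m - i) + q) / Gamma (real (Suc m - i) + 1))
          \<longlongrightarrow> 1 / real (Suc m - i)) (at 0)"
    using i by (intro tendsto_Gamma_shift_ratio) auto
  then show "((\<lambda>q. Gamma (real (Suc m - i) + q) / Gamma (real (Suc m - i) + 1))
          \<longlongrightarrow> 1 / real (Suc m - i)) (at_right 0)"
    by (auto intro: tendsto_within_subset)
qed

lemma tendsto_frac_julia0:
  "((\<lambda>q. frac_julia0 q z0 n) \<longlongrightarrow> (quad_poly z0 ^^ (n + 1)) 0) (at_right 0)"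
proof (induction n rule: less_induct)
  case (less n)
  show ?case
  proof (cases n)
    case 0
    then show ?thesis
      by (simp add: quad_poly_def)
  next
    case (Suc m)
    have last: "((\<lambda>q. frac_julia0 q z0 m) \<longlongrightarrow> (quad_poly z0 ^^ (m + 1)) 0) (at_right 0)"
      using less.IH Suc by simp
    obtain M where memory: "((\<lambda>q. frac_julia0_memory q z0 m) \<longlongrightarrow> M) (at_right 0)"
      using tendsto_frac_julia0_memory[of m z0 "\<lambda>i. (quad_poly z0 ^^ (i + 1)) 0"] less.IH Suc
      by simp
    have limit_eq: "z0 + ((quad_poly z0 ^^ (m + 1)) 0)\<^sup>2 + complex_of_real 0 * M = (quad_poly z0 ^^ (n + 1)) 0"
      by (simp add: Suc quad_poly_def add.commute)
    have "((\<lambda>q. z0 + (frac_julia0 q z0 m)\<^sup>2 + complex_of_real (rGamma q) * frac_julia0_memory q z0 m)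
            \<longlongrightarrow> (quad_poly z0 ^^ (n + 1)) 0) (at_right 0)"
      unfolding limit_eq[symmetric] by (intro tendsto_intros last memory tendsto_rGamma_at_right_0)
    moreover have "\<forall>\<^sub>F q in at_right 0.
        z0 + (frac_julia0 q z0 m)\<^sup>2 + complex_of_real (rGamma q) * frac_julia0_memory q z0 m
          = frac_julia0 q z0 n"
      using eventually_at_right_less[of 0] unfolding Suc
      by eventually_elim (rule frac_julia0_Suc_eq_memory[symmetric])
    ultimately show ?thesis
      by (rule Lim_transform_eventually)
  qed
qed

theorem proposition2:
  shows "(\<forall>z0::complex. \<forall>n::nat.
           ((\<lambda>q. frac_julia0 q z0 n) \<longlongrightarrow> (quad_poly z0 ^^ (n + 1)) 0) (at_right 0))
         \<and> {z0::complex. bounded (range (\<lambda>n::nat. Lim (at_right 0) (\<lambda>q. frac_julia0 q z0 n)))}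
             = mandelbrot_set"
proof
  show "\<forall>z0 n. ((\<lambda>q. frac_julia0 q z0 n) \<longlongrightarrow> (quad_poly z0 ^^ (n + 1)) 0) (at_right 0)"
    using tendsto_frac_julia0 by blast
  have "Lim (at_right 0) (\<lambda>q. frac_julia0 q z0 n) = (quad_poly z0 ^^ Suc n) 0" for z0 n
    using tendsto_Lim[OF trivial_limit_at_right_real tendsto_frac_julia0] by simp
  then show "{z0. bounded (range (\<lambda>n. Lim (at_right 0) (\<lambda>q. frac_julia0 q z0 n)))} = mandelbrot_set"
    by (simp add: mandelbrot_set_def)
qed

end
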